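(* Let $X$ and $Y$ be slices that are not jointly spacelike (i.e. $X\cup Y$ is not spacelike). Then the presheaf $(X\wedge Y)(-):\mathsf{Slice}^{op}\to\mathsf{Set}$ is not representable.
   Context: Fix a connected, time-orientable Lorentzian manifold $\mathcal{M}$ with a fixed time-orientation (no further causality assumptions). A causal curve is an equivalence class, up to monotone reparametrisation, of smooth regular paths $\mu:\iota\to\mathcal{M}$ ($\iota\subseteq\mathbb{R}$ an interval) whose tangent is everywhere timelike or null; it is future-directed if the tangent is everywhere future-directed. Write $x\prec y$ if $x=y$ or there is a future-directed causal curve from $x$ to $y$. A region $A\subseteq\mathcal{M}$ is spacelike if no two distinct points $x,y\in A$ satisfy $x\prec y$. A slice is a closed spacelike subset of $\mathcal{M}$; slices $X,Y$ are jointly spacelike if $X\cup Y$ is spacelike. For regions $A,B$, $\mathcal{C}[A,B]$ is the set of future-directed causal curves passing through $A$ and then $B$: for a representative path $\mu:\iota\to\mathcal{M}$, there exists $q\in\iota$ with $\mu(q)\in B$, and for every such $q$ there exists $p\le q$ with $\mu(p)\in A$. The category $\mathsf{Slice}$ has slices as objects, $\mathsf{Slice}(X,Y)=\mathcal{P}(\mathcal{C}[X,Y])$ (the powerset), composition $T\circ S:=T\cap S$, identities $1_X=\mathcal{C}[X,X]$. For slices $X,Y$, $(X\wedge Y)(-)$ is the presheaf with $(X\wedge Y)(Z):=\mathcal{P}(\mathcal{C}[Z,X]\cap\mathcal{C}[Z,Y])$ and $(X\wedge Y)(U:Z'\to Z):C\mapsto C\cap U$. *)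

theory Defs
  imports "HOL-Analysis.Analysis"
begin

definition pdiff :: "(real^'n \<Rightarrow> 'b::real_normed_vector) \<Rightarrow> 'n \<Rightarrow> real^'n \<Rightarrow> 'b" where
  "pdiff f i x = vector_derivative (\<lambda>t. f (x + t *\<^sub>R axis i 1)) (at 0)"

primrec pds :: "'n list \<Rightarrow> (real^'n \<Rightarrow> 'b::real_normed_vector) \<Rightarrow> real^'n \<Rightarrow> 'b" where
  "pds [] f = f"
| "pds (i # is) f = pdiff (pds is f) i"

definition cinf_on :: "(real^'n) set \<Rightarrow> (real^'n \<Rightarrow> 'b::real_normed_vector) \<Rightarrow> bool" where
  "cinf_on U f \<longleftrightarrow> open U \<and>
     (\<forall>is. continuous_on U (pds is f) \<and>
        (\<forall>i. \<forall>x\<in>U. ((\<lambda>t. pds is f (x + t *\<^sub>R axis i 1)) has_vector_derivative pds (i # is) f x) (at 0)))"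

primrec pathder :: "nat \<Rightarrow> real set \<Rightarrow> (real \<Rightarrow> 'a::real_normed_vector) \<Rightarrow> real \<Rightarrow> 'a" where
  "pathder 0 S g = g"
| "pathder (Suc k) S g = (\<lambda>t. vector_derivative (pathder k S g) (at t within S))"

definition path_cinf :: "real set \<Rightarrow> (real \<Rightarrow> 'a::real_normed_vector) \<Rightarrow> bool" where
  "path_cinf S g \<longleftrightarrow>
     (\<forall>k. \<forall>t\<in>S. (pathder k S g has_vector_derivative pathder (Suc k) S g t) (at t within S))"

text \<open>A chart is a pair (U, phi) of an open domain U and a map phi into R^n.
  The metric and the time-orientation field are given in the coordinates of each chart.\<close>

type_synonym ('m, 'n) chart = "'m set \<times> ('m \<Rightarrow> real^'n)"

record ('m, 'n) spacetime =
  atlas :: "('m, 'n) chart set"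
  metric :: "('m, 'n) chart \<Rightarrow> 'm \<Rightarrow> real^'n \<Rightarrow> real^'n \<Rightarrow> real"
  torient :: "('m, 'n) chart \<Rightarrow> 'm \<Rightarrow> real^'n"

definition lorentz_form :: "(real^'n \<Rightarrow> real^'n \<Rightarrow> real) \<Rightarrow> bool" where
  "lorentz_form B \<longleftrightarrow> bilinear B \<and> (\<forall>v w. B v w = B w v) \<and>
     (\<exists>e :: 'n \<Rightarrow> real^'n. \<exists>i0.
        \<forall>i j. B (e i) (e j) = (if i \<noteq> j then 0 else if i = i0 then -1 else 1))"

definition transition :: "('m, 'n) chart \<Rightarrow> ('m, 'n) chart \<Rightarrow> real^'n \<Rightarrow> real^'n" where
  "transition c1 c2 = snd c2 \<circ> inv_into (fst c1) (snd c1)"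

definition is_spacetime :: "('m::topological_space, 'n::finite) spacetime \<Rightarrow> bool" where
  "is_spacetime ST \<longleftrightarrow>
     (\<forall>(U, \<phi>)\<in>atlas ST. open U \<and> open (\<phi> ` U) \<and> homeomorphism U (\<phi> ` U) \<phi> (inv_into U \<phi>)) \<and>
     \<Union>(fst ` atlas ST) = UNIV \<and>
     (\<forall>c1\<in>atlas ST. \<forall>c2\<in>atlas ST.
        cinf_on (snd c1 ` (fst c1 \<inter> fst c2)) (transition c1 c2)) \<and>
     (\<forall>(U, \<phi>)\<in>atlas ST.
        (\<forall>i j. cinf_on (\<phi> ` U) (\<lambda>x. metric ST (U, \<phi>) (inv_into U \<phi> x) (axis i 1) (axis j 1))) \<and>
        continuous_on (\<phi> ` U) (\<lambda>x. torient ST (U, \<phi>) (inv_into U \<phi> x))) \<and>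
     (\<forall>c\<in>atlas ST. \<forall>p\<in>fst c.
        lorentz_form (metric ST c p) \<and> metric ST c p (torient ST c p) (torient ST c p) < 0) \<and>
     (\<forall>c1\<in>atlas ST. \<forall>c2\<in>atlas ST. \<forall>p\<in>fst c1 \<inter> fst c2.
        (let D = frechet_derivative (transition c1 c2) (at (snd c1 p)) in
          (\<forall>v w. metric ST c2 p (D v) (D w) = metric ST c1 p v w) \<and>
          torient ST c2 p = D (torient ST c1 p)))"

definition fd_causal_path :: "('m::topological_space, 'n::finite) spacetime \<Rightarrow> real set \<Rightarrow> (real \<Rightarrow> 'm) \<Rightarrow> bool" where
  "fd_causal_path ST I \<mu> \<longleftrightarrow>
     is_interval I \<and> (\<exists>a\<in>I. \<exists>b\<in>I. a < b) \<and> continuous_on I \<mu> \<and>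
     (\<forall>(U, \<phi>)\<in>atlas ST.
        path_cinf (I \<inter> \<mu> -` U) (\<phi> \<circ> \<mu>) \<and>
        (\<forall>t\<in>I. \<mu> t \<in> U \<longrightarrow>
           (let v = vector_derivative (\<phi> \<circ> \<mu>) (at t within I) in
              v \<noteq> 0 \<and> metric ST (U, \<phi>) (\<mu> t) v v \<le> 0 \<and>
              metric ST (U, \<phi>) (\<mu> t) v (torient ST (U, \<phi>) (\<mu> t)) < 0)))"

definition reparam :: "real set \<times> (real \<Rightarrow> 'm) \<Rightarrow> real set \<times> (real \<Rightarrow> 'm) \<Rightarrow> bool" where
  "reparam r s \<longleftrightarrow> (\<exists>h. bij_betw h (fst r) (fst s) \<and> mono_on (fst r) h \<and>
                         (\<forall>t\<in>fst r. snd r t = snd s (h t)))"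

definition curve_class :: "('m::topological_space, 'n::finite) spacetime \<Rightarrow> real set \<Rightarrow> (real \<Rightarrow> 'm) \<Rightarrow> (real set \<times> (real \<Rightarrow> 'm)) set" where
  "curve_class ST I \<mu> = {(J, \<nu>). fd_causal_path ST J \<nu> \<and> reparam (J, \<nu>) (I, \<mu>)}"

definition fd_causal_curves :: "('m::topological_space, 'n::finite) spacetime \<Rightarrow> (real set \<times> (real \<Rightarrow> 'm)) set set" where
  "fd_causal_curves ST = {curve_class ST I \<mu> | I \<mu>. fd_causal_path ST I \<mu>}"

definition causal_prec :: "('m::topological_space, 'n::finite) spacetime \<Rightarrow> 'm \<Rightarrow> 'm \<Rightarrow> bool" where
  "causal_prec ST x y \<longleftrightarrow> x = y \<or>
     (\<exists>\<gamma>\<in>fd_causal_curves ST. \<exists>(I, \<mu>)\<in>\<gamma>. \<exists>p\<in>I. \<exists>q\<in>I. p \<le> q \<and> \<mu> p = x \<and> \<mu> q = y)"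

definition spacelike :: "('m::topological_space, 'n::finite) spacetime \<Rightarrow> 'm set \<Rightarrow> bool" where
  "spacelike ST A \<longleftrightarrow> (\<forall>x\<in>A. \<forall>y\<in>A. x \<noteq> y \<longrightarrow> \<not> causal_prec ST x y)"

definition slice :: "('m::topological_space, 'n::finite) spacetime \<Rightarrow> 'm set \<Rightarrow> bool" where
  "slice ST X \<longleftrightarrow> closed X \<and> spacelike ST X"

definition jointly_spacelike :: "('m::topological_space, 'n::finite) spacetime \<Rightarrow> 'm set \<Rightarrow> 'm set \<Rightarrow> bool" where
  "jointly_spacelike ST X Y \<longleftrightarrow> spacelike ST (X \<union> Y)"

text \<open>C[A,B]: future-directed causal curves passing through A and then B.\<close>
definition CC :: "('m::topological_space, 'n::finite) spacetime \<Rightarrow> 'm set \<Rightarrow> 'm set \<Rightarrow> (real set \<times> (real \<Rightarrow> 'm)) set set" where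
  "CC ST A B = {\<gamma> \<in> fd_causal_curves ST. \<exists>(I, \<mu>)\<in>\<gamma>.
      (\<exists>q\<in>I. \<mu> q \<in> B) \<and> (\<forall>q\<in>I. \<mu> q \<in> B \<longrightarrow> (\<exists>p\<in>I. p \<le> q \<and> \<mu> p \<in> A))}"

definition slice_hom :: "('m::topological_space, 'n::finite) spacetime \<Rightarrow> 'm set \<Rightarrow> 'm set \<Rightarrow> (real set \<times> (real \<Rightarrow> 'm)) set set set" where
  "slice_hom ST X Y = Pow (CC ST X Y)"

definition slice_comp :: "'c set \<Rightarrow> 'c set \<Rightarrow> 'c set" where
  "slice_comp T S = T \<inter> S"

definition slice_id :: "('m::topological_space, 'n::finite) spacetime \<Rightarrow> 'm set \<Rightarrow> (real set \<times> (real \<Rightarrow> 'm)) set set" where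
  "slice_id ST X = CC ST X X"

definition wedge_obj :: "('m::topological_space, 'n::finite) spacetime \<Rightarrow> 'm set \<Rightarrow> 'm set \<Rightarrow> 'm set \<Rightarrow> (real set \<times> (real \<Rightarrow> 'm)) set set set" where
  "wedge_obj ST X Y Z = Pow (CC ST Z X \<inter> CC ST Z Y)"

text \<open>Action of U : Z' -> Z, sending (X /\ Y)(Z) to (X /\ Y)(Z').\<close>
definition wedge_map :: "'c set \<Rightarrow> 'c set \<Rightarrow> 'c set" where
  "wedge_map U C = C \<inter> U"

text \<open>A presheaf on Slice (object part F, action Fm Z' Z U : F Z -> F Z' for U : Z' -> Z)
  is representable iff it is naturally isomorphic to Slice(-, W) for some slice W.\<close>
definition slice_representable ::
  "('m::topological_space, 'n::finite) spacetime \<Rightarrow> ('m set \<Rightarrow> 'x set) \<Rightarrow>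
   ('m set \<Rightarrow> 'm set \<Rightarrow> (real set \<times> (real \<Rightarrow> 'm)) set set \<Rightarrow> 'x \<Rightarrow> 'x) \<Rightarrow> bool" where
  "slice_representable ST F Fm \<longleftrightarrow>
     (\<exists>W. slice ST W \<and>
        (\<exists>\<alpha>. (\<forall>Z. slice ST Z \<longrightarrow> bij_betw (\<alpha> Z) (slice_hom ST Z W) (F Z)) \<and>
              (\<forall>Z Z'. slice ST Z \<longrightarrow> slice ST Z' \<longrightarrow>
                 (\<forall>U\<in>slice_hom ST Z' Z. \<forall>S\<in>slice_hom ST Z W.
                    \<alpha> Z' (slice_comp S U) = Fm Z' Z U (\<alpha> Z S)))))"

end

theory Submission
  imports Defs
begin

text \<open>
  A natural isomorphism \<open>\<alpha>\<close> between \<open>Slice(-, W)\<close> and \<open>X \<and> Y\<close> is determined by the single set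
  \<open>E = \<alpha>\<^sub>W(1\<^sub>W)\<close>: naturality forces \<open>\<alpha>\<^sub>Z(S) = E \<inter> S\<close>, and such a map is a bijection of powersets
  only if \<open>C[Z, W] = C[Z, X] \<inter> C[Z, Y]\<close> for every slice \<open>Z\<close>. No slice \<open>W\<close> can do this when some
  \<open>a \<in> X\<close> causally precedes some \<open>b \<in> Y\<close> with \<open>a \<noteq> b\<close>. Run a causal curve from \<open>a\<close> until it first
  meets the closed set \<open>Y\<close>, at \<open>b'\<close>. This curve lies in \<open>C[X, X] \<inter> C[X, Y]\<close>, so it meets \<open>W\<close>. If
  it meets \<open>W\<close> before \<open>b'\<close>, an initial piece lies in \<open>C[W, W] \<subseteq> C[W, Y]\<close> and meets \<open>Y\<close> too early.
  Otherwise it lies in \<open>C[W, W] \<subseteq> C[W, X]\<close>, which forces \<open>a \<in> W\<close>, and \<open>a \<prec> b'\<close> contradicts that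
  \<open>W\<close> is spacelike.
\<close>

lemma at_within_Int_open:
  assumes "open A" "t \<in> A"
  shows "at t within (S \<inter> A) = at t within S"
  by (rule at_within_nhd[OF assms(2,1)]) auto

lemma vector_derivative_within_subset:
  assumes "(f has_vector_derivative f') (at t within S)" "T \<subseteq> S" "at t within T \<noteq> bot"
  shows "vector_derivative f (at t within T) = vector_derivative f (at t within S)"
proof -
  have "at t within S \<noteq> bot"
    using assms(2,3) by (metis at_le bot.extremum_uniqueI)
  then show ?thesis
    using assms vector_derivative_within has_vector_derivative_within_subset by metis
qed

lemma pathder_subset:
  assumes g: "path_cinf S g" and "T \<subseteq> S" and not_bot: "\<And>t. t \<in> T \<Longrightarrow> at t within T \<noteq> bot"
    and "t \<in> T"
  shows "pathder k T g t = pathder k S g t"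
  using \<open>t \<in> T\<close>
proof (induction k arbitrary: t)
  case 0
  then show ?case by simp
next
  case (Suc k)
  have "(pathder k S g has_vector_derivative pathder (Suc k) S g t) (at t within S)"
    using g Suc.prems \<open>T \<subseteq> S\<close> unfolding path_cinf_def by blast
  then have "(pathder k T g has_vector_derivative pathder (Suc k) S g t) (at t within T)"
    by (rule has_vector_derivative_weaken) (use Suc \<open>T \<subseteq> S\<close> in auto)
  then show ?case
    using vector_derivative_within[OF not_bot[OF Suc.prems]] by simp
qed

lemma path_cinf_subset:
  assumes g: "path_cinf S g" and "T \<subseteq> S" and "\<And>t. t \<in> T \<Longrightarrow> at t within T \<noteq> bot"
  shows "path_cinf T g"
  unfolding path_cinf_def
proof (intro allI ballI)
  fix k t assume "t \<in> T"
  have "(pathder k S g has_vector_derivative pathder (Suc k) S g t) (at t within S)"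
    using g \<open>t \<in> T\<close> \<open>T \<subseteq> S\<close> unfolding path_cinf_def by blast
  then show "(pathder k T g has_vector_derivative pathder (Suc k) T g t) (at t within T)"
    using pathder_subset[OF assms] \<open>t \<in> T\<close> \<open>T \<subseteq> S\<close>
    by (metis (no_types, lifting) has_vector_derivative_weaken)
qed

lemma path_cinf_preimage_restrict:
  fixes \<mu> :: "real \<Rightarrow> 'm::topological_space"
  assumes cont: "continuous_on I \<mu>" and "open U" and pc: "path_cinf (I \<inter> \<mu> -` U) g"
    and "{c..d} \<subseteq> I" "c < d"
  shows "path_cinf ({c..d} \<inter> \<mu> -` U) g"
    and "\<And>t. t \<in> {c..d} \<Longrightarrow> \<mu> t \<in> U \<Longrightarrow>
           vector_derivative g (at t within {c..d}) = vector_derivative g (at t within I)"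
proof -
  obtain A where A: "open A" "A \<inter> I = \<mu> -` U \<inter> I"
    using cont \<open>open U\<close> unfolding continuous_on_open_invariant by blast
  then have IA: "I \<inter> \<mu> -` U = I \<inter> A" and cdA: "{c..d} \<inter> \<mu> -` U = {c..d} \<inter> A"
    using \<open>{c..d} \<subseteq> I\<close> by blast+
  have not_bot: "at t within {c..d} \<noteq> bot" if "t \<in> {c..d}" for t
    using that \<open>c < d\<close> by (simp add: trivial_limit_within)
  show "path_cinf ({c..d} \<inter> \<mu> -` U) g"
    unfolding cdA
    by (rule path_cinf_subset[OF pc[unfolded IA]])
      (use \<open>{c..d} \<subseteq> I\<close> not_bot at_within_Int_open[OF A(1)] in auto)
  fix t assume t: "t \<in> {c..d}" "\<mu> t \<in> U"
  then have "t \<in> I \<inter> A"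
    using IA \<open>{c..d} \<subseteq> I\<close> by blast
  then have "(g has_vector_derivative pathder 1 (I \<inter> A) g t) (at t within I)"
    using pc[unfolded IA] at_within_Int_open[OF A(1)] unfolding path_cinf_def
    by (metis IntD2 One_nat_def pathder.simps(1))
  then show "vector_derivative g (at t within {c..d}) = vector_derivative g (at t within I)"
    by (rule vector_derivative_within_subset) (use \<open>{c..d} \<subseteq> I\<close> not_bot t in auto)
qed

definition future_causal_tangent :: "('m, 'n) spacetime \<Rightarrow> ('m, 'n) chart \<Rightarrow> 'm \<Rightarrow> real^'n \<Rightarrow> bool" where
  "future_causal_tangent ST c x v \<longleftrightarrow>
     v \<noteq> 0 \<and> metric ST c x v v \<le> 0 \<and> metric ST c x v (torient ST c x) < 0"

lemma fd_causal_path_iff: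
  "fd_causal_path ST I \<mu> \<longleftrightarrow>
     is_interval I \<and> (\<exists>a\<in>I. \<exists>b\<in>I. a < b) \<and> continuous_on I \<mu> \<and>
     (\<forall>(U, \<phi>)\<in>atlas ST.
        path_cinf (I \<inter> \<mu> -` U) (\<phi> \<circ> \<mu>) \<and>
        (\<forall>t\<in>I. \<mu> t \<in> U \<longrightarrow>
           future_causal_tangent ST (U, \<phi>) (\<mu> t) (vector_derivative (\<phi> \<circ> \<mu>) (at t within I))))"
  unfolding fd_causal_path_def future_causal_tangent_def Let_def ..

lemma fd_causal_path_restrict:
  assumes ST: "is_spacetime ST" and \<mu>: "fd_causal_path ST I \<mu>" and "{c..d} \<subseteq> I" "c < d"
  shows "fd_causal_path ST {c..d} \<mu>"
proof -
  have cont: "continuous_on I \<mu>"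
    using \<mu> unfolding fd_causal_path_iff by auto
  have chart: "path_cinf ({c..d} \<inter> \<mu> -` U) (\<phi> \<circ> \<mu>) \<and>
      (\<forall>t\<in>{c..d}. \<mu> t \<in> U \<longrightarrow>
         future_causal_tangent ST (U, \<phi>) (\<mu> t) (vector_derivative (\<phi> \<circ> \<mu>) (at t within {c..d})))"
    if chart: "(U, \<phi>) \<in> atlas ST" for U \<phi>
  proof -
    have "open U"
      using ST chart unfolding is_spacetime_def by fast
    moreover have "path_cinf (I \<inter> \<mu> -` U) (\<phi> \<circ> \<mu>)"
      and "\<forall>t\<in>I. \<mu> t \<in> U \<longrightarrow>
         future_causal_tangent ST (U, \<phi>) (\<mu> t) (vector_derivative (\<phi> \<circ> \<mu>) (at t within I))"
      using \<mu> chart unfolding fd_causal_path_iff by fast+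
    ultimately show ?thesis
      using path_cinf_preimage_restrict[OF cont, of U "\<phi> \<circ> \<mu>" c d] \<open>{c..d} \<subseteq> I\<close> \<open>c < d\<close>
      by (auto simp: subset_iff)
  qed
  have "\<exists>s\<in>{c..d}. \<exists>t\<in>{c..d}. s < t"
    using \<open>c < d\<close> by (intro bexI[of _ c] bexI[of _ d]) auto
  then show ?thesis
    using cont \<open>{c..d} \<subseteq> I\<close> chart unfolding fd_causal_path_iff
    by (auto intro: continuous_on_subset is_interval_cc)
qed

lemma first_hit_closed:
  fixes \<mu> :: "real \<Rightarrow> 'a::topological_space"
  assumes "continuous_on {p..q} \<mu>" "closed Y" "p \<le> q" "\<mu> q \<in> Y" "\<mu> p \<notin> Y"
  obtains q0 where "p < q0" "q0 \<le> q" "\<mu> q0 \<in> Y" "\<forall>t\<in>{p..<q0}. \<mu> t \<notin> Y"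
proof -
  define T where "T = {p..q} \<inter> \<mu> -` Y"
  have "closed T"
    unfolding T_def using continuous_closed_preimage[OF assms(1) _ assms(2)] by simp
  moreover have "q \<in> T" and bdd: "bdd_below T"
    unfolding T_def using assms(3,4) by (auto intro: bdd_belowI[of _ p])
  ultimately have "Inf T \<in> T"
    using closed_contains_Inf by blast
  moreover have "\<forall>t\<in>{p..<Inf T}. \<mu> t \<notin> Y"
    using cInf_lower[OF _ bdd] \<open>Inf T \<in> T\<close> unfolding T_def by fastforce
  ultimately show ?thesis
    using that assms(5) unfolding T_def by (metis IntD1 IntD2 atLeastAtMost_iff order_le_less vimageE)
qed

lemma curve_class_refl: "fd_causal_path ST I \<mu> \<Longrightarrow> (I, \<mu>) \<in> curve_class ST I \<mu>"
  unfolding curve_class_def reparam_def by (auto intro!: exI[of _ id] simp: mono_on_id)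

lemma curve_class_in_fd_causal_curves:
  "fd_causal_path ST I \<mu> \<Longrightarrow> curve_class ST I \<mu> \<in> fd_causal_curves ST"
  unfolding fd_causal_curves_def by blast

lemma causal_prec_path:
  assumes "fd_causal_path ST I \<mu>" "p \<in> I" "q \<in> I" "p \<le> q"
  shows "causal_prec ST (\<mu> p) (\<mu> q)"
  unfolding causal_prec_def
  using curve_class_in_fd_causal_curves[OF assms(1)] curve_class_refl[OF assms(1)] assms(2-4)
  by blast

lemma causal_prec_pathE:
  assumes "causal_prec ST a b" "a \<noteq> b"
  obtains I \<mu> p q where "fd_causal_path ST I \<mu>" "p \<in> I" "q \<in> I" "p \<le> q" "\<mu> p = a" "\<mu> q = b"
proof -
  obtain \<gamma> I \<mu> p q where "\<gamma> \<in> fd_causal_curves ST" "(I, \<mu>) \<in> \<gamma>"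
    and "p \<in> I" "q \<in> I" "p \<le> q" "\<mu> p = a" "\<mu> q = b"
    using assms unfolding causal_prec_def by blast
  moreover from this(1,2) have "fd_causal_path ST I \<mu>"
    unfolding fd_causal_curves_def curve_class_def by auto
  ultimately show ?thesis
    using that by blast
qed

lemma curve_class_in_CC_iff:
  assumes \<mu>: "fd_causal_path ST I \<mu>"
  shows "curve_class ST I \<mu> \<in> CC ST A B \<longleftrightarrow>
    (\<exists>q\<in>I. \<mu> q \<in> B) \<and> (\<forall>q\<in>I. \<mu> q \<in> B \<longrightarrow> (\<exists>p\<in>I. p \<le> q \<and> \<mu> p \<in> A))"
proof
  assume "curve_class ST I \<mu> \<in> CC ST A B"
  then obtain K \<kappa> where K: "(K, \<kappa>) \<in> curve_class ST I \<mu>"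
    and hit: "\<exists>q\<in>K. \<kappa> q \<in> B" and first: "\<forall>q\<in>K. \<kappa> q \<in> B \<longrightarrow> (\<exists>p\<in>K. p \<le> q \<and> \<kappa> p \<in> A)"
    unfolding CC_def by blast
  then obtain h where h: "bij_betw h K I" "mono_on K h" "\<forall>t\<in>K. \<kappa> t = \<mu> (h t)"
    unfolding curve_class_def reparam_def by auto
  show "(\<exists>q\<in>I. \<mu> q \<in> B) \<and> (\<forall>q\<in>I. \<mu> q \<in> B \<longrightarrow> (\<exists>p\<in>I. p \<le> q \<and> \<mu> p \<in> A))"
  proof (intro conjI ballI impI)
    obtain q where "q \<in> K" "\<kappa> q \<in> B"
      using hit by blast
    then show "\<exists>q\<in>I. \<mu> q \<in> B"
      using h(3) bij_betwE[OF h(1)] by auto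
  next
    fix q assume "q \<in> I" "\<mu> q \<in> B"
    then obtain r where r: "r \<in> K" "h r = q"
      using h(1) unfolding bij_betw_def by blast
    then obtain p where p: "p \<in> K" "p \<le> r" "\<kappa> p \<in> A"
      using first h(3) \<open>\<mu> q \<in> B\<close> by auto
    have "h p \<le> q"
      using mono_onD[OF h(2) p(1) r(1) p(2)] r(2) by simp
    then show "\<exists>p\<in>I. p \<le> q \<and> \<mu> p \<in> A"
      using p h(3) bij_betwE[OF h(1)] by auto
  qed
next
  assume "(\<exists>q\<in>I. \<mu> q \<in> B) \<and> (\<forall>q\<in>I. \<mu> q \<in> B \<longrightarrow> (\<exists>p\<in>I. p \<le> q \<and> \<mu> p \<in> A))"
  then show "curve_class ST I \<mu> \<in> CC ST A B"
    unfolding CC_def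
    using curve_class_in_fd_causal_curves[OF \<mu>] curve_class_refl[OF \<mu>] by blast
qed

lemma curve_class_in_CC_diag_iff:
  "fd_causal_path ST I \<mu> \<Longrightarrow> curve_class ST I \<mu> \<in> CC ST B B \<longleftrightarrow> (\<exists>q\<in>I. \<mu> q \<in> B)"
  by (auto simp: curve_class_in_CC_iff)

lemma CC_subset_CC_diag: "CC ST Z W \<subseteq> CC ST W W"
  unfolding CC_def by blast

lemma causal_prec_first_hitE:
  assumes ST: "is_spacetime ST" and "causal_prec ST a b" "closed Y" "a \<notin> Y" "b \<in> Y"
  obtains \<mu> p q0 where "p < q0" "\<mu> p = a" "\<mu> q0 \<in> Y" "\<forall>t\<in>{p..<q0}. \<mu> t \<notin> Y"
    "\<And>r. p < r \<Longrightarrow> r \<le> q0 \<Longrightarrow> fd_causal_path ST {p..r} \<mu>"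
proof -
  obtain I \<mu> p q where \<mu>: "fd_causal_path ST I \<mu>"
    and pq: "p \<in> I" "q \<in> I" "p \<le> q" "\<mu> p = a" "\<mu> q = b"
    using causal_prec_pathE assms by metis
  have "{p..q} \<subseteq> I"
    using \<mu> pq(1,2) unfolding fd_causal_path_def by (auto intro: mem_is_interval_1_I)
  moreover have "continuous_on I \<mu>"
    using \<mu> unfolding fd_causal_path_def by blast
  ultimately obtain q0 where q0: "p < q0" "q0 \<le> q" "\<mu> q0 \<in> Y" "\<forall>t\<in>{p..<q0}. \<mu> t \<notin> Y"
    using first_hit_closed[of p q \<mu> Y] assms(3-5) pq by (metis continuous_on_subset)
  moreover have "fd_causal_path ST {p..r} \<mu>" if "p < r" "r \<le> q0" for r
    by (rule fd_causal_path_restrict[OF ST \<mu>]) (use that \<open>{p..q} \<subseteq> I\<close> q0 in auto)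
  ultimately show ?thesis
    using that pq(4) by blast
qed

lemma meet_slice_excludes_causal_pair:
  assumes ST: "is_spacetime ST" and Y: "slice ST Y" and W: "spacelike ST W"
    and CC_XW: "CC ST X W = CC ST X X \<inter> CC ST X Y"
    and CC_WW: "CC ST W W = CC ST W X \<inter> CC ST W Y"
    and "a \<in> X" "b \<in> Y" "a \<noteq> b"
  shows "\<not> causal_prec ST a b"
proof
  assume "causal_prec ST a b"
  then have "a \<notin> Y"
    using Y \<open>b \<in> Y\<close> \<open>a \<noteq> b\<close> unfolding slice_def spacelike_def by blast
  then obtain \<mu> p q0 where q0: "p < q0" "\<mu> p = a" "\<mu> q0 \<in> Y" and first: "\<forall>t\<in>{p..<q0}. \<mu> t \<notin> Y"
    and initial: "\<And>r. p < r \<Longrightarrow> r \<le> q0 \<Longrightarrow> fd_causal_path ST {p..r} \<mu>"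
    using causal_prec_first_hitE[OF ST \<open>causal_prec ST a b\<close>] Y \<open>b \<in> Y\<close>
    unfolding slice_def by blast
  note to_Y = initial[OF q0(1) order_refl]
  have "curve_class ST {p..q0} \<mu> \<in> CC ST X Y"
  proof -
    have "\<exists>p'\<in>{p..q0}. p' \<le> s \<and> \<mu> p' \<in> X" if "s \<in> {p..q0}" for s
      using that q0(1,2) \<open>a \<in> X\<close> by (intro bexI[of _ p]) auto
    then show ?thesis
      using curve_class_in_CC_iff[OF to_Y] q0 first by auto
  qed
  moreover have "curve_class ST {p..q0} \<mu> \<in> CC ST X X"
    using curve_class_in_CC_diag_iff[OF to_Y] q0(1,2) \<open>a \<in> X\<close> by force
  ultimately obtain t where t: "t \<in> {p..q0}" "\<mu> t \<in> W"
    using curve_class_in_CC_iff[OF to_Y] CC_XW by blast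
  show False
  proof (cases "t < q0")
    case True
    define m where "m = (t + q0) / 2"
    have "p < m" "m < q0" "t \<in> {p..m}"
      using True t unfolding m_def by auto
    then have to_m: "fd_causal_path ST {p..m} \<mu>"
      using initial by simp
    then have "curve_class ST {p..m} \<mu> \<in> CC ST W Y"
      using curve_class_in_CC_diag_iff[OF to_m] \<open>t \<in> {p..m}\<close> t(2) CC_WW by blast
    then obtain s where "s \<in> {p..m}" "\<mu> s \<in> Y"
      using curve_class_in_CC_iff[OF to_m] by blast
    then show False
      using first \<open>m < q0\<close> by auto
  next
    case False
    then have "t = q0"
      using t by simp
    have "curve_class ST {p..q0} \<mu> \<in> CC ST W X"
      using curve_class_in_CC_diag_iff[OF to_Y] t CC_WW by blast
    then obtain p' where "p' \<in> {p..q0}" "p' \<le> p" "\<mu> p' \<in> W"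
      using curve_class_in_CC_iff[OF to_Y] q0(1,2) \<open>a \<in> X\<close> by force
    then have "a \<in> W"
      using q0(2) by simp
    moreover have "causal_prec ST a (\<mu> q0)"
      using causal_prec_path[OF to_Y, of p q0] q0(1,2) by simp
    moreover have "a \<noteq> \<mu> q0"
      using q0(3) \<open>a \<notin> Y\<close> by auto
    ultimately show False
      using W t \<open>t = q0\<close> unfolding spacelike_def by blast
  qed
qed

lemma meet_slice_jointly_spacelike:
  assumes ST: "is_spacetime ST" and X: "slice ST X" and Y: "slice ST Y" and W: "slice ST W"
    and meet: "\<And>Z. slice ST Z \<Longrightarrow> CC ST Z W = CC ST Z X \<inter> CC ST Z Y"
  shows "jointly_spacelike ST X Y"
  unfolding jointly_spacelike_def spacelike_def
proof (intro ballI impI)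
  fix a b assume ab: "a \<in> X \<union> Y" "b \<in> X \<union> Y" "a \<noteq> b"
  have CC_WW: "CC ST W W = CC ST W X \<inter> CC ST W Y"
    and CC_XW: "CC ST X W = CC ST X X \<inter> CC ST X Y"
    and CC_YW: "CC ST Y W = CC ST Y Y \<inter> CC ST Y X"
    using meet X Y W by auto
  have "spacelike ST W"
    using W unfolding slice_def by simp
  consider "a \<in> X" "b \<in> X" | "a \<in> Y" "b \<in> Y" | "a \<in> X" "b \<in> Y" | "a \<in> Y" "b \<in> X"
    using ab(1,2) by blast
  then show "\<not> causal_prec ST a b"
  proof cases
    case 3
    show ?thesis
      by (rule meet_slice_excludes_causal_pair[OF ST Y \<open>spacelike ST W\<close> CC_XW CC_WW 3 ab(3)])
  next
    case 4
    show ?thesis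
      by (rule meet_slice_excludes_causal_pair[OF ST X \<open>spacelike ST W\<close> CC_YW _ 4 ab(3)])
        (use CC_WW in auto)
  qed (use X Y ab(3) in \<open>auto simp: slice_def spacelike_def\<close>)
qed

lemma bij_betw_Int_Pow_imp_eq:
  assumes "bij_betw (\<lambda>S. E \<inter> S) (Pow A) (Pow B)"
  shows "A = B"
proof
  show "A \<subseteq> B"
  proof
    fix c assume "c \<in> A"
    then have "E \<inter> {c} \<noteq> E \<inter> {}"
      using assms unfolding bij_betw_def inj_on_def by blast
    moreover have "E \<inter> {c} \<subseteq> B"
      using assms \<open>c \<in> A\<close> unfolding bij_betw_def by blast
    ultimately show "c \<in> B" by auto
  qed
  show "B \<subseteq> A"
    using assms unfolding bij_betw_def by (force simp: image_iff)
qed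

lemma slice_representable_wedgeE:
  assumes "slice_representable ST (wedge_obj ST X Y) (\<lambda>Z' Z U C. wedge_map U C)"
  obtains W where "slice ST W" "\<And>Z. slice ST Z \<Longrightarrow> CC ST Z W = CC ST Z X \<inter> CC ST Z Y"
proof -
  obtain W \<alpha> where W: "slice ST W"
    and bij: "\<And>Z. slice ST Z \<Longrightarrow> bij_betw (\<alpha> Z) (slice_hom ST Z W) (wedge_obj ST X Y Z)"
    and nat: "\<And>Z Z' U S. slice ST Z \<Longrightarrow> slice ST Z' \<Longrightarrow> U \<in> slice_hom ST Z' Z \<Longrightarrow>
                S \<in> slice_hom ST Z W \<Longrightarrow> \<alpha> Z' (slice_comp S U) = wedge_map U (\<alpha> Z S)"
    using assms unfolding slice_representable_def by blast
  define E where "E = \<alpha> W (CC ST W W)"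
  have "CC ST Z W = CC ST Z X \<inter> CC ST Z Y" if Z: "slice ST Z" for Z
  proof (rule bij_betw_Int_Pow_imp_eq)
    have "\<alpha> Z S = E \<inter> S" if "S \<subseteq> CC ST Z W" for S
      using nat[OF W Z, of S "CC ST W W"] that CC_subset_CC_diag[of ST Z W]
      unfolding E_def slice_hom_def slice_comp_def wedge_map_def by (auto simp: Int_absorb1)
    then show "bij_betw (\<lambda>S. E \<inter> S) (Pow (CC ST Z W)) (Pow (CC ST Z X \<inter> CC ST Z Y))"
      using bij[OF Z] bij_betw_cong[of "Pow (CC ST Z W)" "\<alpha> Z" "\<lambda>S. E \<inter> S"]
      unfolding slice_hom_def wedge_obj_def by auto
  qed
  with W that show ?thesis by blast
qed

theorem mainTheorem10:
  fixes ST :: "('m::{t2_space, second_countable_topology}, 'n::finite) spacetime"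
    and X Y :: "'m set"
  assumes "is_spacetime ST"
    and "connected (UNIV :: 'm set)"
    and "slice ST X" and "slice ST Y"
    and "\<not> jointly_spacelike ST X Y"
  shows "\<not> slice_representable ST (wedge_obj ST X Y) (\<lambda>Z' Z U C. wedge_map U C)"
proof
  assume "slice_representable ST (wedge_obj ST X Y) (\<lambda>Z' Z U C. wedge_map U C)"
  then obtain W where "slice ST W" "\<And>Z. slice ST Z \<Longrightarrow> CC ST Z W = CC ST Z X \<inter> CC ST Z Y"
    by (rule slice_representable_wedgeE) blast
  then have "jointly_spacelike ST X Y"
    using meet_slice_jointly_spacelike assms(1,3,4) by blast
  with assms(5) show False by contradiction
qed

end
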